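(* Let $(\widetilde{\mathbf{x}}_\ell,y_\ell)$, $\ell=1,\dots,N$, be data with $\widetilde{\mathbf{x}}_\ell\in\mathbb{R}^d$, and let $y^N=(y_1,\dots,y_N)^\top$. Assume the Gram matrix $G$ is invertible. Write $G=U\Lambda U^\top$, where $U$ is orthogonal and $\Lambda=\mathrm{diag}(\widehat\mu_1,\dots,\widehat\mu_N)$. Let $D=\mathrm{diag}\big(\frac{\widehat\mu_1}{\widehat\mu_1+\lambda},\dots,\frac{\widehat\mu_N}{\widehat\mu_N+\lambda}\big)$. Then the $L^2$-boosting estimate after $m$ steps satisfies $$\|\widehat f^{(m)}\|_H^2=\frac1N(y^N)^\top U\big(I-(I-D)^m\big)^2\Lambda^{-1}U^\top y^N .$$
   Context: $H$ is an RKHS with positive definite kernel $K$; in the paper, $H=H_1\oplus\cdots\oplus H_d$ is the additive RKHS of Gaussian kernels on the coordinates. Gram matrix: $G_{ij}=K(\widetilde{\mathbf{x}}_i,\widetilde{\mathbf{x}}_j)/N$. Base learner: kernel ridge regression with fixed $\lambda>0$. Given $u\in\mathbb{R}^N$ it returns $\widehat g=\frac1{\sqrt N}\sum_\ell\beta_\ell K(\cdot,\widetilde{\mathbf{x}}_\ell)$ with $\beta=\frac1{\sqrt N}(G+\lambda I)^{-1}u$. Its fitted values are $Su$ with $S=G(G+\lambda I)^{-1}$. $L^2$-boosting: $\widehat f^{(0)}=0$ and $\widehat f^{(m+1)}=\widehat f^{(m)}+$(base learner fit to the residuals $y_\ell-\widehat f^{(m)}(\widetilde{\mathbf{x}}_\ell)$).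 The fitted values after $m$ steps are $(I-(I-S)^m)y^N$. *)

theory Defs
  imports "HOL-Analysis.Analysis"
begin

text \<open>The RKHS H is modelled abstractly as a real inner product space 'h together
with the kernel sections kx :: 'x \<Rightarrow> 'h (kx a = K(.,a)). The reproducing
property f(a) = <f, K(.,a)>_H gives point evaluation, and K(a,b) = <K(.,a),K(.,b)>_H.
Data points are indexed by a finite type 'n with N = CARD('n).\<close>

definition diag_mat :: "real^'n \<Rightarrow> real^'n^'n" where
  "diag_mat v = (\<chi> i j. if i = j then v $ i else 0)"

definition mat_pow :: "real^'n^'n \<Rightarrow> nat \<Rightarrow> real^'n^'n" where
  "mat_pow A m = (((**) A) ^^ m) (mat 1)"

definition rk_eval :: "('x \<Rightarrow> 'h::real_inner) \<Rightarrow> 'h \<Rightarrow> 'x \<Rightarrow> real" where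
  "rk_eval kx f a = inner f (kx a)"

definition gram :: "('x \<Rightarrow> 'x \<Rightarrow> real) \<Rightarrow> ('n::finite \<Rightarrow> 'x) \<Rightarrow> real^'n^'n" where
  "gram K xs = (\<chi> i j. K (xs i) (xs j) / real CARD('n))"

definition krr :: "('x \<Rightarrow> 'h::real_inner) \<Rightarrow> ('x \<Rightarrow> 'x \<Rightarrow> real) \<Rightarrow> real
                   \<Rightarrow> ('n::finite \<Rightarrow> 'x) \<Rightarrow> real^'n \<Rightarrow> 'h" where
  "krr kx K lam xs u =
     (let N = real CARD('n);
          beta = (1 / sqrt N) *s (matrix_inv (gram K xs + scaleR lam (mat 1)) *v u)
      in scaleR (1 / sqrt N) (\<Sum>l\<in>UNIV. scaleR (beta $ l) (kx (xs l))))"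

primrec boost :: "('x \<Rightarrow> 'h::real_inner) \<Rightarrow> ('x \<Rightarrow> 'x \<Rightarrow> real) \<Rightarrow> real
                  \<Rightarrow> ('n::finite \<Rightarrow> 'x) \<Rightarrow> real^'n \<Rightarrow> nat \<Rightarrow> 'h" where
  "boost kx K lam xs y 0 = 0"
| "boost kx K lam xs y (Suc m) =
     boost kx K lam xs y m +
     krr kx K lam xs (\<chi> l. y $ l - rk_eval kx (boost kx K lam xs y m) (xs l))"

end

theory Submission
  imports Defs
begin

text \<open>Every boosting iterate is a kernel expansion \<open>\<Sum>\<^sub>l c\<^sub>l K(\<cdot>, x\<^sub>l)\<close>; by the reproducing
property its values at the data are \<open>N G c\<close> and its squared norm is \<open>N c\<^sup>T G c\<close>, so boosting
becomes a linear recursion for the coefficient vector \<open>c\<^sub>m\<close>. Writing \<open>G = U \<Lambda> U\<^sup>T\<close>, all matrices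
involved are diagonalised by \<open>U\<close>, and in the eigenbasis the recursion decouples into the scalar
recursions \<open>q\<^sub>m\<^sub>+\<^sub>1 = q\<^sub>m + d (1 - q\<^sub>m)\<close> for the shrinkage factors \<open>q\<^sub>m = 1 - (1 - d)\<^sup>m\<close>, giving
\<open>c\<^sub>m = N\<^sup>-\<^sup>1 U (q\<^sub>m / \<mu>) U\<^sup>T y\<close>. The eigenvalues are nonzero because \<open>G\<close> is invertible and nonnegative
because \<open>G\<close> is a Gram matrix, so \<open>\<mu> + \<lambda> > 0\<close>.\<close>

lemma matrix_inv_eqI:
  fixes A B :: "'a::field^'n^'n"
  assumes "A ** B = mat 1"
  shows "matrix_inv A = B"
proof -
  have "B ** A = mat 1" using assms matrix_left_right_inverse by blast
  with assms have "\<exists>A'. A ** A' = mat 1 \<and> A' ** A = mat 1" by blast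
  then have "matrix_inv A ** A = mat 1"
    unfolding matrix_inv_def by (metis (mono_tags, lifting) someI_ex)
  then show ?thesis by (metis assms matrix_mul_assoc matrix_mul_lid matrix_mul_rid)
qed

lemma diag_mat_mult_vec: "diag_mat a *v w = a * w"
  by (simp add: diag_mat_def matrix_vector_mult_def vec_eq_iff if_distrib[of "\<lambda>x. x * _"] cong: if_cong)

lemma diag_mat_mult: "diag_mat a ** diag_mat b = diag_mat (a * b)"
  by (simp add: matrix_eq diag_mat_mult_vec mult.assoc flip: matrix_vector_mul_assoc)

lemma mat_1_eq_diag_mat: "mat 1 = diag_mat 1"
  by (simp add: diag_mat_def mat_def vec_eq_iff)

lemma diag_mat_diff: "diag_mat a - diag_mat b = diag_mat (a - b)"
  by (simp add: diag_mat_def vec_eq_iff)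

lemma mat_pow_diag_mat: "mat_pow (diag_mat a) k = diag_mat (a ^ k)"
  by (induction k) (simp_all add: mat_pow_def mat_1_eq_diag_mat diag_mat_mult)

lemma matrix_inv_diag_mat:
  assumes "\<And>i. a $ i \<noteq> 0"
  shows "matrix_inv (diag_mat a) = diag_mat (\<chi> i. 1 / a $ i)"
proof (rule matrix_inv_eqI)
  have "a * (\<chi> i. 1 / a $ i) = 1" by (simp add: vec_eq_iff assms)
  then show "diag_mat a ** diag_mat (\<chi> i. 1 / a $ i) = mat 1"
    by (simp add: diag_mat_mult mat_1_eq_diag_mat)
qed

lemma orthogonal_matrix_inner:
  fixes U :: "real^'n^'n"
  assumes "orthogonal_matrix U"
  shows "(U *v v) \<bullet> (U *v w) = v \<bullet> w"
  using assms orthogonal_transformation_matrix[of "(*v) U"]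
  by (simp add: orthogonal_transformation_def)

lemma orthogonal_matrix_transpose_mult_vec:
  assumes "orthogonal_matrix U"
  shows "transpose U *v (U *v w) = w" and "U *v (transpose U *v w) = w"
  using assms by (simp_all add: orthogonal_matrix_def matrix_vector_mul_assoc)

lemma orthogonal_conj_diag_mult_vec:
  assumes "orthogonal_matrix U"
  shows "(U ** diag_mat a ** transpose U) *v (U *v w) = U *v (a * w)"
  by (simp only: matrix_vector_mul_assoc[symmetric] orthogonal_matrix_transpose_mult_vec[OF assms]
      diag_mat_mult_vec)

lemma orthogonal_conj_eqI:
  fixes U A B :: "real^'n^'n"
  assumes "orthogonal_matrix U" and "\<And>w. A *v (U *v w) = B *v (U *v w)"
  shows "A = B"
  unfolding matrix_eq
  by (metis assms orthogonal_matrix_transpose_mult_vec(2))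

lemma orthogonal_conj_diag_mult:
  assumes "orthogonal_matrix U"
  shows "(U ** diag_mat a ** transpose U) ** (U ** diag_mat b ** transpose U)
    = U ** diag_mat (a * b) ** transpose U"
  by (rule orthogonal_conj_eqI[OF assms])
    (metis orthogonal_conj_diag_mult_vec[OF assms] matrix_vector_mul_assoc mult.assoc)

lemma orthogonal_conj_diag_add_scaleR_mat_1:
  assumes "orthogonal_matrix U"
  shows "U ** diag_mat a ** transpose U + c *\<^sub>R mat 1 = U ** diag_mat (\<chi> i. a $ i + c) ** transpose U"
proof (rule orthogonal_conj_eqI[OF assms])
  fix w
  have "(U ** diag_mat a ** transpose U + c *\<^sub>R mat 1) *v (U *v w) = U *v (a * w) + c *\<^sub>R (U *v w)"
    by (simp add: matrix_vector_mult_add_rdistrib orthogonal_conj_diag_mult_vec[OF assms]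
        flip: scaleR_matrix_vector_assoc)
  also have "\<dots> = U *v (a * w + c *\<^sub>R w)"
    by (simp add: matrix_vector_right_distrib matrix_vector_mult_scaleR)
  also have "a * w + c *\<^sub>R w = (\<chi> i. a $ i + c) * w"
    by (simp add: vec_eq_iff algebra_simps)
  finally show "(U ** diag_mat a ** transpose U + c *\<^sub>R mat 1) *v (U *v w)
      = (U ** diag_mat (\<chi> i. a $ i + c) ** transpose U) *v (U *v w)"
    by (simp add: orthogonal_conj_diag_mult_vec[OF assms])
qed

lemma matrix_inv_orthogonal_conj_diag:
  assumes "orthogonal_matrix U" and "\<And>i. a $ i \<noteq> 0"
  shows "matrix_inv (U ** diag_mat a ** transpose U) = U ** diag_mat (\<chi> i. 1 / a $ i) ** transpose U"
proof (rule matrix_inv_eqI)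
  have "a * (\<chi> i. 1 / a $ i) = 1" by (simp add: vec_eq_iff assms)
  then show "(U ** diag_mat a ** transpose U) ** (U ** diag_mat (\<chi> i. 1 / a $ i) ** transpose U) = mat 1"
    using assms(1)
    by (simp add: orthogonal_conj_diag_mult flip: mat_1_eq_diag_mat) (simp add: orthogonal_matrix_def)
qed

lemma invertible_orthogonal_conj_diag_nonzero:
  assumes "orthogonal_matrix U" and "invertible (U ** diag_mat a ** transpose U)"
  shows "a $ i \<noteq> 0"
proof
  assume "a $ i = 0"
  then have "a * axis i 1 = 0" by (simp add: vec_eq_iff axis_def)
  then have "(U ** diag_mat a ** transpose U) *v (U *v axis i 1) = (U ** diag_mat a ** transpose U) *v 0"
    by (simp add: orthogonal_conj_diag_mult_vec[OF assms(1)])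
  then have "U *v axis i 1 = 0"
    by (metis inj_matrix_vector_mult[OF assms(2)] injD)
  then have "axis i 1 \<bullet> axis i (1::real) = 0"
    by (metis orthogonal_matrix_inner[OF assms(1)] inner_zero_left)
  then show False by (simp add: inner_axis_axis)
qed

lemma orthogonal_conj_diag_quadratic_form:
  assumes "orthogonal_matrix U"
  shows "(U *v v) \<bullet> ((U ** diag_mat a ** transpose U) *v (U *v w)) = v \<bullet> (a * w)"
  by (simp add: orthogonal_conj_diag_mult_vec orthogonal_matrix_inner assms)

lemma orthogonal_conj_diag_nonneg:
  assumes "orthogonal_matrix U" and "\<And>c. 0 \<le> c \<bullet> ((U ** diag_mat a ** transpose U) *v c)"
  shows "0 \<le> a $ i"
  using assms(2)[of "U *v axis i 1"]
  by (simp add: orthogonal_conj_diag_quadratic_form[OF assms(1)] inner_axis')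

definition kernel_expansion :: "('x \<Rightarrow> 'h::real_vector) \<Rightarrow> ('n::finite \<Rightarrow> 'x) \<Rightarrow> real^'n \<Rightarrow> 'h" where
  "kernel_expansion kx xs c = (\<Sum>l\<in>UNIV. c $ l *\<^sub>R kx (xs l))"

lemma rk_eval_kernel_expansion:
  fixes K :: "'x \<Rightarrow> 'x \<Rightarrow> real" and kx :: "'x \<Rightarrow> 'h::real_inner" and xs :: "'n::finite \<Rightarrow> 'x"
  assumes reproducing: "\<And>a b. K a b = inner (kx a) (kx b)"
  shows "rk_eval kx (kernel_expansion kx xs c) (xs i) = real CARD('n) * (gram K xs *v c) $ i"
proof -
  have "rk_eval kx (kernel_expansion kx xs c) (xs i) = (\<Sum>l\<in>UNIV. c $ l * K (xs l) (xs i))"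
    by (simp add: rk_eval_def kernel_expansion_def inner_sum_left reproducing)
  also have "\<dots> = (\<Sum>l\<in>UNIV. K (xs i) (xs l) * c $ l)"
    by (simp add: reproducing inner_commute mult.commute)
  finally show ?thesis
    by (simp add: gram_def matrix_vector_mult_def sum_distrib_left)
qed

lemma norm_kernel_expansion:
  fixes K :: "'x \<Rightarrow> 'x \<Rightarrow> real" and kx :: "'x \<Rightarrow> 'h::real_inner" and xs :: "'n::finite \<Rightarrow> 'x"
  assumes reproducing: "\<And>a b. K a b = inner (kx a) (kx b)"
  shows "(norm (kernel_expansion kx xs c))\<^sup>2 = real CARD('n) * (c \<bullet> (gram K xs *v c))"
proof -
  have "(norm (kernel_expansion kx xs c))\<^sup>2 = (\<Sum>i\<in>UNIV. c $ i * (\<Sum>l\<in>UNIV. c $ l * K (xs i) (xs l)))"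
    by (simp add: power2_norm_eq_inner kernel_expansion_def inner_sum_left inner_sum_right
        reproducing sum_distrib_left inner_commute mult.left_commute)
  then show ?thesis
    by (simp add: gram_def matrix_vector_mult_def inner_vec_def sum_distrib_left mult_ac)
qed

lemma gram_nonneg:
  fixes K :: "'x \<Rightarrow> 'x \<Rightarrow> real" and kx :: "'x \<Rightarrow> 'h::real_inner" and xs :: "'n::finite \<Rightarrow> 'x"
  assumes reproducing: "\<And>a b. K a b = inner (kx a) (kx b)"
  shows "0 \<le> c \<bullet> (gram K xs *v c)"
proof -
  have "0 \<le> real CARD('n) * (c \<bullet> (gram K xs *v c))"
    by (simp flip: norm_kernel_expansion[of K kx, OF reproducing])
  then show ?thesis by (simp add: zero_le_mult_iff)
qed

lemma krr_eq_kernel_expansion: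
  fixes xs :: "'n::finite \<Rightarrow> 'x"
  shows "krr kx K lam xs u =
    kernel_expansion kx xs ((1 / real CARD('n)) *\<^sub>R (matrix_inv (gram K xs + lam *\<^sub>R mat 1) *v u))"
proof -
  have "1 / sqrt (real CARD('n)) * (1 / sqrt (real CARD('n))) = 1 / real CARD('n)"
    by (simp add: power_divide flip: power2_eq_square)
  then show ?thesis
    by (simp add: krr_def kernel_expansion_def scaleR_sum_right flip: mult.assoc)
qed

lemma kernel_expansion_add:
  "kernel_expansion kx xs (a + b) = kernel_expansion kx xs a + kernel_expansion kx xs b"
  by (simp add: kernel_expansion_def scaleR_add_left sum.distrib)

primrec boost_coef :: "real^'n::finite^'n \<Rightarrow> real \<Rightarrow> real^'n \<Rightarrow> nat \<Rightarrow> real^'n" where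
  "boost_coef G lam y 0 = 0"
| "boost_coef G lam y (Suc m) = boost_coef G lam y m +
     (1 / real CARD('n)) *\<^sub>R (matrix_inv (G + lam *\<^sub>R mat 1) *v
        (y - real CARD('n) *\<^sub>R (G *v boost_coef G lam y m)))"

lemma boost_eq_kernel_expansion:
  fixes kx :: "'x \<Rightarrow> 'h::real_inner" and xs :: "'n::finite \<Rightarrow> 'x"
  assumes reproducing: "\<And>a b. K a b = inner (kx a) (kx b)"
  shows "boost kx K lam xs y m = kernel_expansion kx xs (boost_coef (gram K xs) lam y m)"
proof (induction m)
  case 0
  show ?case by (simp add: kernel_expansion_def)
next
  case (Suc m)
  have "(\<chi> l. y $ l - rk_eval kx (boost kx K lam xs y m) (xs l))
      = y - real CARD('n) *\<^sub>R (gram K xs *v boost_coef (gram K xs) lam y m)"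
    by (simp add: Suc vec_eq_iff rk_eval_kernel_expansion[of K kx, OF reproducing])
  then show ?case
    by (simp add: Suc krr_eq_kernel_expansion kernel_expansion_add)
qed

lemma boost_coef_orthogonal_conj_diag:
  fixes U :: "real^'n::finite^'n" and mu :: "real^'n"
  assumes U: "orthogonal_matrix U" and mu: "\<And>i. mu $ i \<noteq> 0" and mu_lam: "\<And>i. mu $ i + lam \<noteq> 0"
  defines "d \<equiv> \<chi> i. mu $ i / (mu $ i + lam)" and "r \<equiv> \<chi> i. 1 / mu $ i"
  shows "boost_coef (U ** diag_mat mu ** transpose U) lam y m
    = (1 / real CARD('n)) *\<^sub>R (U *v ((1 - (1 - d) ^ m) * r * (transpose U *v y)))"
proof (induction m)
  case 0
  show ?case by simp
next
  case (Suc m)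
  define N where "N = real CARD('n)"
  define G where "G = U ** diag_mat mu ** transpose U"
  define z where "z = transpose U *v y"
  have y: "y = U *v z"
    unfolding z_def by (simp only: orthogonal_matrix_transpose_mult_vec(2)[OF U])
  have mu_r: "mu * r = 1" and s: "(\<chi> i. 1 / (mu $ i + lam)) = d * r"
    using mu by (simp_all add: vec_eq_iff r_def d_def)
  have IH: "boost_coef G lam y m = (1 / N) *\<^sub>R (U *v ((1 - (1 - d) ^ m) * r * z))"
    using Suc unfolding N_def G_def z_def .
  have fitted: "N *\<^sub>R (G *v boost_coef G lam y m) = U *v (mu * ((1 - (1 - d) ^ m) * r * z))"
    unfolding IH by (simp add: G_def N_def orthogonal_conj_diag_mult_vec[OF U] matrix_vector_mult_scaleR)
  have "y - N *\<^sub>R (G *v boost_coef G lam y m) = U *v (z - mu * ((1 - (1 - d) ^ m) * r * z))"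
    by (subst (1) y) (simp add: fitted matrix_vector_mult_diff_distrib)
  also have "z - mu * ((1 - (1 - d) ^ m) * r * z) = (1 - d) ^ m * z"
    by (simp add: algebra_simps mu_r flip: mult.assoc)
  finally have residual: "matrix_inv (G + lam *\<^sub>R mat 1) *v (y - N *\<^sub>R (G *v boost_coef G lam y m))
      = U *v (d * r * (1 - d) ^ m * z)"
    by (simp add: G_def orthogonal_conj_diag_add_scaleR_mat_1[OF U] matrix_inv_orthogonal_conj_diag[OF U]
        mu_lam orthogonal_conj_diag_mult_vec[OF U] s mult.assoc)
  have "(1 - (1 - d) ^ m) * r * z + d * r * (1 - d) ^ m * z = (1 - (1 - d) ^ Suc m) * r * z"
    by (simp add: algebra_simps)
  then have "boost_coef G lam y (Suc m) = (1 / N) *\<^sub>R (U *v ((1 - (1 - d) ^ Suc m) * r * z))"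
    unfolding boost_coef.simps(2) N_def[symmetric] residual unfolding IH
    by (simp flip: scaleR_right_distrib matrix_vector_right_distrib)
  then show ?case unfolding N_def G_def z_def .
qed

lemma quadratic_form_boost_coef:
  fixes U :: "real^'n::finite^'n" and mu :: "real^'n"
  assumes U: "orthogonal_matrix U" and mu: "\<And>i. mu $ i \<noteq> 0" and mu_lam: "\<And>i. mu $ i + lam \<noteq> 0"
  defines "G \<equiv> U ** diag_mat mu ** transpose U"
    and "d \<equiv> \<chi> i. mu $ i / (mu $ i + lam)" and "r \<equiv> \<chi> i. 1 / mu $ i"
  shows "real CARD('n) * (boost_coef G lam y m \<bullet> (G *v boost_coef G lam y m))
    = (1 / real CARD('n)) * (y \<bullet> ((U ** diag_mat ((1 - (1 - d) ^ m) ^ 2 * r) ** transpose U) *v y))"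
proof -
  define N where "N = real CARD('n)"
  define q where "q = 1 - (1 - d) ^ m"
  define z where "z = transpose U *v y"
  have mu_r: "mu * r = 1"
    using mu by (simp add: vec_eq_iff r_def)
  have "N * (boost_coef G lam y m \<bullet> (G *v boost_coef G lam y m))
      = N * (((1 / N) *\<^sub>R (U *v (q * r * z))) \<bullet> (G *v ((1 / N) *\<^sub>R (U *v (q * r * z)))))"
    using boost_coef_orthogonal_conj_diag[OF U mu mu_lam]
    by (simp add: G_def N_def q_def d_def r_def z_def)
  also have "\<dots> = (1 / N) * ((q * r * z) \<bullet> (mu * (q * r * z)))"
    by (simp add: G_def matrix_vector_mult_scaleR orthogonal_conj_diag_quadratic_form[OF U] N_def
        power2_eq_square)
  also have "mu * (q * r * z) = q * (mu * r) * z"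
    by (simp only: mult_ac)
  also have "(q * r * z) \<bullet> (q * (mu * r) * z) = z \<bullet> (q ^ 2 * r * z)"
    unfolding mu_r by (simp add: inner_vec_def power2_eq_square mult_ac)
  also have "\<dots> = y \<bullet> ((U ** diag_mat (q ^ 2 * r) ** transpose U) *v y)"
    using orthogonal_conj_diag_quadratic_form[OF U, of z "q ^ 2 * r" z]
    unfolding z_def orthogonal_matrix_transpose_mult_vec(2)[OF U] by (rule sym)
  finally show ?thesis unfolding N_def q_def .
qed

theorem lemma3:
  fixes K :: "real^'d \<Rightarrow> real^'d \<Rightarrow> real"
    and kx :: "real^'d \<Rightarrow> 'h::real_inner"
    and xs :: "'n::finite \<Rightarrow> real^'d"
    and y :: "real^'n"
    and lam :: real
    and U :: "real^'n^'n"
    and mu :: "real^'n"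
    and m :: nat
  assumes reproducing: "\<And>a b. K a b = inner (kx a) (kx b)"
    and lam_pos: "lam > 0"
    and G_inv: "invertible (gram K xs)"
    and U_orth: "orthogonal_matrix U"
    and eig: "gram K xs = U ** diag_mat mu ** transpose U"
  shows "(norm (boost kx K lam xs y m))\<^sup>2 =
    (1 / real CARD('n)) *
      (y \<bullet> ((U ** mat_pow (mat 1 - mat_pow (mat 1 - diag_mat (\<chi> i. mu $ i / (mu $ i + lam))) m) 2
               ** matrix_inv (diag_mat mu) ** transpose U) *v y))"
proof -
  define d where "d = (\<chi> i. mu $ i / (mu $ i + lam))"
  define r where "r = (\<chi> i. 1 / mu $ i)"
  have mu_nz: "mu $ i \<noteq> 0" for i
    using G_inv unfolding eig by (rule invertible_orthogonal_conj_diag_nonzero[OF U_orth])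
  have "0 \<le> c \<bullet> (gram K xs *v c)" for c
    by (rule gram_nonneg[of K kx, OF reproducing])
  then have "0 \<le> mu $ i" for i
    unfolding eig by (rule orthogonal_conj_diag_nonneg[OF U_orth])
  then have mu_lam: "mu $ i + lam \<noteq> 0" for i
    using lam_pos by (metis add_nonneg_pos less_irrefl)
  have pow: "mat_pow (mat 1 - mat_pow (mat 1 - diag_mat d) m) 2 = diag_mat ((1 - (1 - d) ^ m) ^ 2)"
    by (simp add: mat_1_eq_diag_mat diag_mat_diff mat_pow_diag_mat)
  have inv: "matrix_inv (diag_mat mu) = diag_mat r"
    unfolding r_def using mu_nz by (rule matrix_inv_diag_mat)
  have "(norm (boost kx K lam xs y m))\<^sup>2
      = real CARD('n) * (boost_coef (gram K xs) lam y m \<bullet> (gram K xs *v boost_coef (gram K xs) lam y m))"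
    by (simp add: boost_eq_kernel_expansion[of K kx, OF reproducing]
        norm_kernel_expansion[of K kx, OF reproducing])
  also have "\<dots> = (1 / real CARD('n)) *
      (y \<bullet> ((U ** diag_mat ((1 - (1 - d) ^ m) ^ 2 * r) ** transpose U) *v y))"
    unfolding eig d_def r_def by (rule quadratic_form_boost_coef[OF U_orth mu_nz mu_lam])
  also have "U ** diag_mat ((1 - (1 - d) ^ m) ^ 2 * r) ** transpose U
      = U ** mat_pow (mat 1 - mat_pow (mat 1 - diag_mat d) m) 2 ** matrix_inv (diag_mat mu) ** transpose U"
    unfolding pow inv by (simp only: diag_mat_mult[symmetric] matrix_mul_assoc)
  finally show ?thesis unfolding d_def .
qed

end
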